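(* Let $(X,\sigma,\tau)$ be a full, separable, chronologically dense Lorentzian metric space satisfying the S-property, and let $x,y\in X$. Then $\mathbf{i}(x)\leq_{\overline{\tau}}\mathbf{i}(y)$ if and only if $y\in\overline{J^+(x)}$ and $x\in\overline{J^-(y)}$ (closures in $\sigma$).
   Context: A Lorentzian metric space $(X,\sigma,\tau)$ is a topological space with $\tau:X\times X\to[0,\infty]$ lower semicontinuous and satisfying $\tau(x,z)\geq\tau(x,y)+\tau(y,z)$ whenever $\tau(x,y),\tau(y,z)>0$. Write $x\ll y$ iff $\tau(x,y)>0$, $I^+(x)=\{y:x\ll y\}$, $I^-(x)=\{y:y\ll x\}$, $I^\pm[A]=\bigcup_{a\in A}I^\pm(a)$. Full: $I^\pm(x)\neq\emptyset$ for all $x$. Future (resp. past) chain: $x_n\ll x_{n+1}$ (resp. $x_{n+1}\ll x_n$). Separable: there is a countable $S$ with $x\ll y\Rightarrow\exists s\in S$, $x\ll s\ll y$. Chronologically dense: every $x$ with $I^-(x)\neq\emptyset$ (resp. $I^+(x)\neq\emptyset$) is the $\sigma$-limit of a future (resp. past) chain. Define $x\leq_\tau y$ iff $I^-(x)\subset I^-(y)$ and $I^+(y)\subset I^+(x)$, and $J^+(x)=\{y:x\leq_\tau y\}$, $J^-(y)=\{x:x\leq_\tau y\}$. Past set: $P=I^-[P]$; $\downarrow S=I^-[\{p:p\ll q\ \forall q\in S\}]$; IP: past set not the union of two proper past subsets; PIP: IP of the form $I^-(p)$; future sets, $\uparrow S$, IF, PIF dually. For nonempty IP $P$ and IF $F$,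 $P\sim_S F$ iff $P$ is a maximal IP in $\downarrow F$ and $F$ a maximal IF in $\uparrow P$; $P\sim_S\emptyset$ (resp. $\emptyset\sim_S F$) if the nonempty $P$ (resp. $F$) is S-related to no nonempty IF (resp. IP). S-property: for every $x$, $I^-(x)\sim_S I^+(x)$, and no other PIF (resp. PIP) is S-related to $I^-(x)$ (resp. $I^+(x)$). c-completion $\overline X=\{(P,F):P\sim_S F\}$, $\mathbf{i}(x)=(I^-(x),I^+(x))$. $\overline\tau((P,F),(P',F'))=0$ if $F=\emptyset$ or $P'=\emptyset$, otherwise $\lim_n\tau(q_n,p'_n)$ for a past chain $\{q_n\}$ with $I^+[\{q_n\}]=F$ and future chain $\{p'_n\}$ with $I^-[\{p'_n\}]=P'$. $a\,\overline\ll\,b$ iff $\overline\tau(a,b)>0$; with $\overline I^\pm$ the corresponding futures/pasts in $\overline X$, $a\leq_{\overline\tau}b$ iff $\overline I^-(a)\subset\overline I^-(b)$ and $\overline I^+(b)\subset\overline I^+(a)$. *)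

theory Defs
  imports "HOL-Analysis.Analysis" "HOL-Library.Extended_Nonnegative_Real"
begin

text \<open>A Lorentzian metric space: the topology sigma is the type-class topology of 'a,
  the time separation is tau :: 'a => 'a => ennreal (values in [0,infinity]).\<close>

definition lsc_tau :: "('a::topological_space \<Rightarrow> 'a \<Rightarrow> ennreal) \<Rightarrow> bool" where
  "lsc_tau \<tau> \<longleftrightarrow> (\<forall>c. open {p :: 'a \<times> 'a. c < \<tau> (fst p) (snd p)})"

definition lorentzian_metric_space :: "('a::topological_space \<Rightarrow> 'a \<Rightarrow> ennreal) \<Rightarrow> bool" where
  "lorentzian_metric_space \<tau> \<longleftrightarrow> lsc_tau \<tau> \<and>
     (\<forall>x y z. \<tau> x y > 0 \<and> \<tau> y z > 0 \<longrightarrow> \<tau> x z \<ge> \<tau> x y + \<tau> y z)"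

definition chr :: "('a \<Rightarrow> 'a \<Rightarrow> ennreal) \<Rightarrow> 'a \<Rightarrow> 'a \<Rightarrow> bool" where
  "chr \<tau> x y \<longleftrightarrow> \<tau> x y > 0"

definition Ip :: "('a \<Rightarrow> 'a \<Rightarrow> ennreal) \<Rightarrow> 'a \<Rightarrow> 'a set" where
  "Ip \<tau> x = {y. chr \<tau> x y}"

definition Im :: "('a \<Rightarrow> 'a \<Rightarrow> ennreal) \<Rightarrow> 'a \<Rightarrow> 'a set" where
  "Im \<tau> x = {y. chr \<tau> y x}"

definition IpS :: "('a \<Rightarrow> 'a \<Rightarrow> ennreal) \<Rightarrow> 'a set \<Rightarrow> 'a set" where
  "IpS \<tau> A = (\<Union>a\<in>A. Ip \<tau> a)"

definition ImS :: "('a \<Rightarrow> 'a \<Rightarrow> ennreal) \<Rightarrow> 'a set \<Rightarrow> 'a set" where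
  "ImS \<tau> A = (\<Union>a\<in>A. Im \<tau> a)"

definition full :: "('a \<Rightarrow> 'a \<Rightarrow> ennreal) \<Rightarrow> bool" where
  "full \<tau> \<longleftrightarrow> (\<forall>x. Ip \<tau> x \<noteq> {} \<and> Im \<tau> x \<noteq> {})"

definition future_chain :: "('a \<Rightarrow> 'a \<Rightarrow> ennreal) \<Rightarrow> (nat \<Rightarrow> 'a) \<Rightarrow> bool" where
  "future_chain \<tau> p \<longleftrightarrow> (\<forall>n. chr \<tau> (p n) (p (Suc n)))"

definition past_chain :: "('a \<Rightarrow> 'a \<Rightarrow> ennreal) \<Rightarrow> (nat \<Rightarrow> 'a) \<Rightarrow> bool" where
  "past_chain \<tau> p \<longleftrightarrow> (\<forall>n. chr \<tau> (p (Suc n)) (p n))"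

definition separable_lms :: "('a \<Rightarrow> 'a \<Rightarrow> ennreal) \<Rightarrow> bool" where
  "separable_lms \<tau> \<longleftrightarrow> (\<exists>S. countable S \<and>
     (\<forall>x y. chr \<tau> x y \<longrightarrow> (\<exists>s\<in>S. chr \<tau> x s \<and> chr \<tau> s y)))"

definition chron_dense :: "('a::topological_space \<Rightarrow> 'a \<Rightarrow> ennreal) \<Rightarrow> bool" where
  "chron_dense \<tau> \<longleftrightarrow>
     (\<forall>x. Im \<tau> x \<noteq> {} \<longrightarrow> (\<exists>p. future_chain \<tau> p \<and> p \<longlonglongrightarrow> x)) \<and>
     (\<forall>x. Ip \<tau> x \<noteq> {} \<longrightarrow> (\<exists>p. past_chain \<tau> p \<and> p \<longlonglongrightarrow> x))"

definition leq_tau :: "('a \<Rightarrow> 'a \<Rightarrow> ennreal) \<Rightarrow> 'a \<Rightarrow> 'a \<Rightarrow> bool" where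
  "leq_tau \<tau> x y \<longleftrightarrow> Im \<tau> x \<subseteq> Im \<tau> y \<and> Ip \<tau> y \<subseteq> Ip \<tau> x"

definition Jp :: "('a \<Rightarrow> 'a \<Rightarrow> ennreal) \<Rightarrow> 'a \<Rightarrow> 'a set" where
  "Jp \<tau> x = {y. leq_tau \<tau> x y}"

definition Jm :: "('a \<Rightarrow> 'a \<Rightarrow> ennreal) \<Rightarrow> 'a \<Rightarrow> 'a set" where
  "Jm \<tau> y = {x. leq_tau \<tau> x y}"

definition past_set :: "('a \<Rightarrow> 'a \<Rightarrow> ennreal) \<Rightarrow> 'a set \<Rightarrow> bool" where
  "past_set \<tau> P \<longleftrightarrow> P = ImS \<tau> P"

definition future_set :: "('a \<Rightarrow> 'a \<Rightarrow> ennreal) \<Rightarrow> 'a set \<Rightarrow> bool" where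
  "future_set \<tau> F \<longleftrightarrow> F = IpS \<tau> F"

definition IP :: "('a \<Rightarrow> 'a \<Rightarrow> ennreal) \<Rightarrow> 'a set \<Rightarrow> bool" where
  "IP \<tau> P \<longleftrightarrow> P \<noteq> {} \<and> past_set \<tau> P \<and>
     \<not> (\<exists>A B. past_set \<tau> A \<and> past_set \<tau> B \<and> A \<subset> P \<and> B \<subset> P \<and> P = A \<union> B)"

definition IF :: "('a \<Rightarrow> 'a \<Rightarrow> ennreal) \<Rightarrow> 'a set \<Rightarrow> bool" where
  "IF \<tau> F \<longleftrightarrow> F \<noteq> {} \<and> future_set \<tau> F \<and>
     \<not> (\<exists>A B. future_set \<tau> A \<and> future_set \<tau> B \<and> A \<subset> F \<and> B \<subset> F \<and> F = A \<union> B)"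

definition down :: "('a \<Rightarrow> 'a \<Rightarrow> ennreal) \<Rightarrow> 'a set \<Rightarrow> 'a set" where
  "down \<tau> S = ImS \<tau> {p. \<forall>q\<in>S. chr \<tau> p q}"

definition up :: "('a \<Rightarrow> 'a \<Rightarrow> ennreal) \<Rightarrow> 'a set \<Rightarrow> 'a set" where
  "up \<tau> S = IpS \<tau> {p. \<forall>q\<in>S. chr \<tau> q p}"

definition maximal_IP_in :: "('a \<Rightarrow> 'a \<Rightarrow> ennreal) \<Rightarrow> 'a set \<Rightarrow> 'a set \<Rightarrow> bool" where
  "maximal_IP_in \<tau> P A \<longleftrightarrow> IP \<tau> P \<and> P \<subseteq> A \<and> \<not> (\<exists>P'. IP \<tau> P' \<and> P \<subset> P' \<and> P' \<subseteq> A)"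

definition maximal_IF_in :: "('a \<Rightarrow> 'a \<Rightarrow> ennreal) \<Rightarrow> 'a set \<Rightarrow> 'a set \<Rightarrow> bool" where
  "maximal_IF_in \<tau> F A \<longleftrightarrow> IF \<tau> F \<and> F \<subseteq> A \<and> \<not> (\<exists>F'. IF \<tau> F' \<and> F \<subset> F' \<and> F' \<subseteq> A)"

definition S_rel_ne :: "('a \<Rightarrow> 'a \<Rightarrow> ennreal) \<Rightarrow> 'a set \<Rightarrow> 'a set \<Rightarrow> bool" where
  "S_rel_ne \<tau> P F \<longleftrightarrow> IP \<tau> P \<and> IF \<tau> F \<and>
     maximal_IP_in \<tau> P (down \<tau> F) \<and> maximal_IF_in \<tau> F (up \<tau> P)"

definition S_rel :: "('a \<Rightarrow> 'a \<Rightarrow> ennreal) \<Rightarrow> 'a set \<Rightarrow> 'a set \<Rightarrow> bool" where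
  "S_rel \<tau> P F \<longleftrightarrow>
     (P \<noteq> {} \<and> F \<noteq> {} \<and> S_rel_ne \<tau> P F) \<or>
     (IP \<tau> P \<and> F = {} \<and> \<not> (\<exists>F'. F' \<noteq> {} \<and> S_rel_ne \<tau> P F')) \<or>
     (P = {} \<and> IF \<tau> F \<and> \<not> (\<exists>P'. P' \<noteq> {} \<and> S_rel_ne \<tau> P' F))"

definition S_property :: "('a \<Rightarrow> 'a \<Rightarrow> ennreal) \<Rightarrow> bool" where
  "S_property \<tau> \<longleftrightarrow> (\<forall>x.
     S_rel \<tau> (Im \<tau> x) (Ip \<tau> x) \<and>
     (\<forall>z. IF \<tau> (Ip \<tau> z) \<and> S_rel \<tau> (Im \<tau> x) (Ip \<tau> z) \<longrightarrow> Ip \<tau> z = Ip \<tau> x) \<and>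
     (\<forall>z. IP \<tau> (Im \<tau> z) \<and> S_rel \<tau> (Im \<tau> z) (Ip \<tau> x) \<longrightarrow> Im \<tau> z = Im \<tau> x))"

definition c_completion :: "('a \<Rightarrow> 'a \<Rightarrow> ennreal) \<Rightarrow> ('a set \<times> 'a set) set" where
  "c_completion \<tau> = {(P, F). S_rel \<tau> P F}"

definition iemb :: "('a \<Rightarrow> 'a \<Rightarrow> ennreal) \<Rightarrow> 'a \<Rightarrow> 'a set \<times> 'a set" where
  "iemb \<tau> x = (Im \<tau> x, Ip \<tau> x)"

text \<open>Extended time separation: limit along a past chain generating F and a future chain
  generating P' (chosen by Hilbert choice; independence of the choice is part of the theory).\<close>
definition tau_bar :: "('a::topological_space \<Rightarrow> 'a \<Rightarrow> ennreal) \<Rightarrow>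
    'a set \<times> 'a set \<Rightarrow> 'a set \<times> 'a set \<Rightarrow> ennreal" where
  "tau_bar \<tau> a b =
    (if snd a = {} \<or> fst b = {} then 0
     else (let q = (SOME q. past_chain \<tau> q \<and> IpS \<tau> (range q) = snd a);
               p = (SOME p. future_chain \<tau> p \<and> ImS \<tau> (range p) = fst b)
           in lim (\<lambda>n. \<tau> (q n) (p n))))"

definition Ip_bar :: "('a::topological_space \<Rightarrow> 'a \<Rightarrow> ennreal) \<Rightarrow> 'a set \<times> 'a set \<Rightarrow> ('a set \<times> 'a set) set" where
  "Ip_bar \<tau> a = {b \<in> c_completion \<tau>. tau_bar \<tau> a b > 0}"

definition Im_bar :: "('a::topological_space \<Rightarrow> 'a \<Rightarrow> ennreal) \<Rightarrow> 'a set \<times> 'a set \<Rightarrow> ('a set \<times> 'a set) set" where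
  "Im_bar \<tau> a = {b \<in> c_completion \<tau>. tau_bar \<tau> b a > 0}"

definition leq_tau_bar :: "('a::topological_space \<Rightarrow> 'a \<Rightarrow> ennreal) \<Rightarrow> 'a set \<times> 'a set \<Rightarrow> 'a set \<times> 'a set \<Rightarrow> bool" where
  "leq_tau_bar \<tau> a b \<longleftrightarrow> Im_bar \<tau> a \<subseteq> Im_bar \<tau> b \<and> Ip_bar \<tau> b \<subseteq> Ip_bar \<tau> a"

end

theory Submission
  imports Defs
begin

text \<open>Along a past chain \<open>q\<close> generating an IF \<open>F\<close> and a future chain \<open>p\<close> generating an IP
  \<open>P\<close>, the reverse triangle inequality makes \<open>\<tau> (q n) (p n)\<close> nondecreasing, so its limit is
  its supremum and is positive iff some \<open>q n \<ll> p n\<close>, i.e. iff \<open>F \<inter> P \<noteq> {}\<close>, whichever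
  generating chains \<open>tau_bar\<close> happens to choose. For embedded points this says that
  \<open>i(w)\<close> is in the chronological past of \<open>i(x)\<close> iff \<open>I\<^sup>+(w) \<inter> I\<^sup>-(x) \<noteq> {}\<close>, i.e. (by
  separability) iff \<open>w \<ll> x\<close>; hence \<open>leq_tau_bar\<close> between embedded points is \<open>leq_tau\<close>.
  Finally \<open>leq_tau\<close> absorbs the closures of the statement because the sets \<open>I\<^sup>\<plusminus>(w)\<close> are
  open by lower semicontinuity.\<close>

definition reverse_triangle :: "('a \<Rightarrow> 'a \<Rightarrow> ennreal) \<Rightarrow> bool" where
  "reverse_triangle \<tau> \<longleftrightarrow> (\<forall>x y z. \<tau> x y > 0 \<and> \<tau> y z > 0 \<longrightarrow> \<tau> x z \<ge> \<tau> x y + \<tau> y z)"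

lemma lorentzian_metric_space_reverse_triangle:
  "lorentzian_metric_space \<tau> \<Longrightarrow> reverse_triangle \<tau>"
  unfolding lorentzian_metric_space_def reverse_triangle_def by blast

lemma reverse_triangleD:
  "reverse_triangle \<tau> \<Longrightarrow> chr \<tau> x y \<Longrightarrow> chr \<tau> y z \<Longrightarrow> \<tau> x z \<ge> \<tau> x y + \<tau> y z"
  unfolding reverse_triangle_def chr_def by blast

lemma chr_trans:
  assumes "reverse_triangle \<tau>" "chr \<tau> x y" "chr \<tau> y z"
  shows "chr \<tau> x z"
proof -
  have "\<tau> x y \<le> \<tau> x y + \<tau> y z" by simp
  also have "\<dots> \<le> \<tau> x z" using reverse_triangleD[OF assms] .
  finally show ?thesis using assms(2) unfolding chr_def by order
qed

lemma separable_lms_interpolate: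
  "separable_lms \<tau> \<Longrightarrow> chr \<tau> x y \<Longrightarrow> \<exists>s. chr \<tau> x s \<and> chr \<tau> s y"
  unfolding separable_lms_def by blast

lemma chr_interpolate_iff:
  "reverse_triangle \<tau> \<Longrightarrow> separable_lms \<tau> \<Longrightarrow> (\<exists>s. chr \<tau> x s \<and> chr \<tau> s y) \<longleftrightarrow> chr \<tau> x y"
  using separable_lms_interpolate chr_trans by metis

definition time_dual :: "('a \<Rightarrow> 'a \<Rightarrow> ennreal) \<Rightarrow> 'a \<Rightarrow> 'a \<Rightarrow> ennreal" where
  "time_dual \<tau> = (\<lambda>x y. \<tau> y x)"

lemma chr_time_dual [simp]: "chr (time_dual \<tau>) x y = chr \<tau> y x"
  unfolding time_dual_def chr_def by simp

lemma Ip_time_dual [simp]: "Ip (time_dual \<tau>) = Im \<tau>"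
  unfolding Ip_def Im_def by (auto simp: fun_eq_iff)

lemma IpS_time_dual [simp]: "IpS (time_dual \<tau>) = ImS \<tau>"
  unfolding IpS_def ImS_def by simp

lemma IF_time_dual [simp]: "IF (time_dual \<tau>) = IP \<tau>"
  unfolding IF_def IP_def future_set_def past_set_def by simp

lemma past_chain_time_dual [simp]: "past_chain (time_dual \<tau>) = future_chain \<tau>"
  unfolding past_chain_def future_chain_def by simp

lemma reverse_triangle_time_dual: "reverse_triangle \<tau> \<Longrightarrow> reverse_triangle (time_dual \<tau>)"
  unfolding reverse_triangle_def time_dual_def by (metis add.commute)

lemma separable_lms_time_dual: "separable_lms \<tau> \<Longrightarrow> separable_lms (time_dual \<tau>)"
  unfolding separable_lms_def chr_time_dual by metis

lemma future_set_IpS: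
  assumes "reverse_triangle \<tau>" "separable_lms \<tau>"
  shows "future_set \<tau> (IpS \<tau> A)"
  unfolding future_set_def
proof
  show "IpS \<tau> A \<subseteq> IpS \<tau> (IpS \<tau> A)"
    using separable_lms_interpolate[OF assms(2)] by (fastforce simp: IpS_def Ip_def)
  show "IpS \<tau> (IpS \<tau> A) \<subseteq> IpS \<tau> A"
    using chr_trans[OF assms(1)] by (auto simp: IpS_def Ip_def)
qed

lemma IF_directed:
  assumes "reverse_triangle \<tau>" "separable_lms \<tau>" "IF \<tau> F" "a \<in> F" "b \<in> F"
  shows "\<exists>c\<in>F. chr \<tau> c a \<and> chr \<tau> c b"
proof (rule ccontr)
  assume no_common_past: "\<not> ?thesis"
  define A where "A = IpS \<tau> (F \<inter> Im \<tau> a)"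
  define B where "B = IpS \<tau> (F - Im \<tau> a)"
  have F: "F = IpS \<tau> F" using assms(3) unfolding IF_def future_set_def by blast
  have "F = A \<union> B" "A \<subseteq> F" "B \<subseteq> F"
    unfolding A_def B_def using F unfolding IpS_def by blast+
  moreover have "b \<notin> A" "a \<notin> B"
    using no_common_past unfolding A_def B_def IpS_def Ip_def Im_def by blast+
  moreover have "future_set \<tau> A" "future_set \<tau> B"
    unfolding A_def B_def using future_set_IpS[OF assms(1,2)] by blast+
  ultimately show False using assms(3-5) unfolding IF_def by blast
qed

lemma IF_past_chain:
  assumes T: "reverse_triangle \<tau>" and Sep: "separable_lms \<tau>" and "IF \<tau> F"
  shows "\<exists>q. past_chain \<tau> q \<and> IpS \<tau> (range q) = F"
proof -
  obtain S where "countable S" and S: "\<And>x y. chr \<tau> x y \<Longrightarrow> \<exists>s\<in>S. chr \<tau> x s \<and> chr \<tau> s y"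
    using Sep unfolding separable_lms_def by blast
  have F: "F = IpS \<tau> F" using \<open>IF \<tau> F\<close> unfolding IF_def future_set_def by blast
  then have in_F: "s \<in> F" if "w \<in> F" "chr \<tau> w s" for w s
    using that unfolding IpS_def Ip_def by blast
  have dense_in_F: "\<exists>s\<in>S \<inter> F. chr \<tau> s z" if "z \<in> F" for z
  proof -
    obtain w where "w \<in> F" "chr \<tau> w z" using \<open>z \<in> F\<close> F unfolding IpS_def Ip_def by blast
    with S in_F show ?thesis by blast
  qed
  have "F \<noteq> {}" using \<open>IF \<tau> F\<close> unfolding IF_def by simp
  then have "S \<inter> F \<noteq> {}" using dense_in_F by blast
  define e where "e = from_nat_into (S \<inter> F)"
  have e_range: "range e = S \<inter> F"
    unfolding e_def using \<open>countable S\<close> \<open>S \<inter> F \<noteq> {}\<close> by (simp add: range_from_nat_into)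
  obtain g where g: "\<And>a b. a \<in> F \<Longrightarrow> b \<in> F \<Longrightarrow> g a b \<in> F \<and> chr \<tau> (g a b) a \<and> chr \<tau> (g a b) b"
    using IF_directed[OF T Sep \<open>IF \<tau> F\<close>] by metis
  text \<open>Directedness lets the chain descend in \<open>F\<close> while passing below the \<open>n\<close>-th element
    of the countable dense subset \<open>S \<inter> F\<close> at step \<open>n\<close>.\<close>
  define q where "q = rec_nat (e 0) (\<lambda>n c. g c (e n))"
  have q_0: "q 0 = e 0" and q_Suc: "q (Suc n) = g (q n) (e n)" for n
    unfolding q_def by simp_all
  have e_in_F: "e n \<in> F" for n
    using e_range by blast
  have q_in_F: "q n \<in> F" for n
    by (induction n) (simp_all add: q_0 q_Suc g e_in_F)
  have q_below: "chr \<tau> (q (Suc n)) (q n)" "chr \<tau> (q (Suc n)) (e n)" for n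
    using g[OF q_in_F e_in_F] by (simp_all add: q_Suc)
  have "past_chain \<tau> q" unfolding past_chain_def using q_below by blast
  moreover have "IpS \<tau> (range q) = F"
  proof
    show "IpS \<tau> (range q) \<subseteq> F" using q_in_F in_F unfolding IpS_def Ip_def by blast
    show "F \<subseteq> IpS \<tau> (range q)"
    proof
      fix z assume "z \<in> F"
      then obtain n where "chr \<tau> (e n) z" using dense_in_F e_range by (metis rangeE)
      then have "chr \<tau> (q (Suc n)) z" using chr_trans[OF T q_below(2)] by blast
      then show "z \<in> IpS \<tau> (range q)" unfolding IpS_def Ip_def by blast
    qed
  qed
  ultimately show ?thesis by blast
qed

lemma IP_future_chain:
  "reverse_triangle \<tau> \<Longrightarrow> separable_lms \<tau> \<Longrightarrow> IP \<tau> P \<Longrightarrow>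
    \<exists>p. future_chain \<tau> p \<and> ImS \<tau> (range p) = P"
  using IF_past_chain[OF reverse_triangle_time_dual separable_lms_time_dual] by simp

lemma past_chain_chr_mono:
  assumes "reverse_triangle \<tau>" "past_chain \<tau> q" "k \<le> n" "chr \<tau> (q k) z"
  shows "chr \<tau> (q n) z"
  using assms(3)
proof (induction n rule: dec_induct)
  case (step n)
  then show ?case using assms(2) chr_trans[OF assms(1)] unfolding past_chain_def by blast
qed (fact assms(4))

lemma future_chain_chr_mono:
  "reverse_triangle \<tau> \<Longrightarrow> future_chain \<tau> p \<Longrightarrow> k \<le> n \<Longrightarrow> chr \<tau> z (p k) \<Longrightarrow> chr \<tau> z (p n)"
  using past_chain_chr_mono[OF reverse_triangle_time_dual, of \<tau> p] by simp

lemma chains_tau_incseq: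
  assumes T: "reverse_triangle \<tau>" and "past_chain \<tau> q" "future_chain \<tau> p"
  shows "incseq (\<lambda>n. \<tau> (q n) (p n))"
proof (rule incseq_SucI)
  fix n
  show "\<tau> (q n) (p n) \<le> \<tau> (q (Suc n)) (p (Suc n))"
  proof (cases "chr \<tau> (q n) (p n)")
    case False
    then show ?thesis unfolding chr_def by simp
  next
    case True
    have q: "chr \<tau> (q (Suc n)) (q n)" and p: "chr \<tau> (p n) (p (Suc n))"
      using assms(2,3) unfolding past_chain_def future_chain_def by blast+
    have "\<tau> (q n) (p n) \<le> \<tau> (q n) (p n) + \<tau> (p n) (p (Suc n))" by simp
    also have "\<dots> \<le> \<tau> (q n) (p (Suc n))" using reverse_triangleD[OF T True p] .
    also have "\<dots> \<le> \<tau> (q (Suc n)) (q n) + \<tau> (q n) (p (Suc n))" by simp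
    also have "\<dots> \<le> \<tau> (q (Suc n)) (p (Suc n))"
      using reverse_triangleD[OF T q chr_trans[OF T True p]] .
    finally show ?thesis .
  qed
qed

lemma chains_tau_lim_pos_iff:
  assumes T: "reverse_triangle \<tau>" and q: "past_chain \<tau> q" and p: "future_chain \<tau> p"
  shows "lim (\<lambda>n. \<tau> (q n) (p n)) > 0 \<longleftrightarrow> IpS \<tau> (range q) \<inter> ImS \<tau> (range p) \<noteq> {}"
proof -
  have "lim (\<lambda>n. \<tau> (q n) (p n)) = (SUP n. \<tau> (q n) (p n))"
    using LIMSEQ_SUP[OF chains_tau_incseq[OF assms]] by (rule limI)
  then have "lim (\<lambda>n. \<tau> (q n) (p n)) > 0 \<longleftrightarrow> (\<exists>n. chr \<tau> (q n) (p n))"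
    by (simp add: less_SUP_iff chr_def)
  also have "\<dots> \<longleftrightarrow> IpS \<tau> (range q) \<inter> ImS \<tau> (range p) \<noteq> {}"
  proof
    assume "\<exists>n. chr \<tau> (q n) (p n)"
    then obtain n where "chr \<tau> (q n) (p n)" by blast
    moreover have "chr \<tau> (p n) (p (Suc n))" using p unfolding future_chain_def by blast
    ultimately show "IpS \<tau> (range q) \<inter> ImS \<tau> (range p) \<noteq> {}"
      unfolding IpS_def ImS_def Ip_def Im_def by blast
  next
    assume "IpS \<tau> (range q) \<inter> ImS \<tau> (range p) \<noteq> {}"
    then obtain z k m where "chr \<tau> (q k) z" "chr \<tau> z (p m)"
      unfolding IpS_def ImS_def Ip_def Im_def by blast
    then have "chr \<tau> (q (max k m)) z" "chr \<tau> z (p (max k m))"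
      using past_chain_chr_mono[OF T q] future_chain_chr_mono[OF T p] by (meson max.cobounded1 max.cobounded2)+
    then show "\<exists>n. chr \<tau> (q n) (p n)" using chr_trans[OF T] by blast
  qed
  finally show ?thesis .
qed

lemma c_completion_IP:
  "a \<in> c_completion \<tau> \<Longrightarrow> fst a \<noteq> {} \<Longrightarrow> IP \<tau> (fst a)"
  unfolding c_completion_def S_rel_def S_rel_ne_def by auto

lemma c_completion_IF:
  "a \<in> c_completion \<tau> \<Longrightarrow> snd a \<noteq> {} \<Longrightarrow> IF \<tau> (snd a)"
  unfolding c_completion_def S_rel_def S_rel_ne_def by auto

lemma tau_bar_pos_iff:
  assumes T: "reverse_triangle \<tau>" and Sep: "separable_lms \<tau>"
    and "a \<in> c_completion \<tau>" "b \<in> c_completion \<tau>"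
  shows "tau_bar \<tau> a b > 0 \<longleftrightarrow> snd a \<inter> fst b \<noteq> {}"
proof (cases "snd a = {} \<or> fst b = {}")
  case True
  then show ?thesis unfolding tau_bar_def by auto
next
  case False
  define q where "q = (SOME q. past_chain \<tau> q \<and> IpS \<tau> (range q) = snd a)"
  define p where "p = (SOME p. future_chain \<tau> p \<and> ImS \<tau> (range p) = fst b)"
  have F: "IF \<tau> (snd a)" and P: "IP \<tau> (fst b)"
    using c_completion_IF[OF assms(3)] c_completion_IP[OF assms(4)] False by blast+
  have q: "past_chain \<tau> q \<and> IpS \<tau> (range q) = snd a"
    unfolding q_def by (rule someI_ex[OF IF_past_chain[OF T Sep F]])
  have p: "future_chain \<tau> p \<and> ImS \<tau> (range p) = fst b"
    unfolding p_def by (rule someI_ex[OF IP_future_chain[OF T Sep P]])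
  have "tau_bar \<tau> a b = lim (\<lambda>n. \<tau> (q n) (p n))"
    unfolding tau_bar_def q_def p_def using False by (simp add: Let_def)
  then show ?thesis using chains_tau_lim_pos_iff[OF T] p q by simp
qed

lemma Im_bar_eq:
  "reverse_triangle \<tau> \<Longrightarrow> separable_lms \<tau> \<Longrightarrow> a \<in> c_completion \<tau> \<Longrightarrow>
    Im_bar \<tau> a = {b \<in> c_completion \<tau>. snd b \<inter> fst a \<noteq> {}}"
  unfolding Im_bar_def using tau_bar_pos_iff by blast

lemma Ip_bar_eq:
  "reverse_triangle \<tau> \<Longrightarrow> separable_lms \<tau> \<Longrightarrow> a \<in> c_completion \<tau> \<Longrightarrow>
    Ip_bar \<tau> a = {b \<in> c_completion \<tau>. snd a \<inter> fst b \<noteq> {}}"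
  unfolding Ip_bar_def using tau_bar_pos_iff by blast

lemma iemb_in_c_completion:
  assumes "S_property \<tau>"
  shows "iemb \<tau> x \<in> c_completion \<tau>"
proof -
  have "S_rel \<tau> (Im \<tau> x) (Ip \<tau> x)" using assms unfolding S_property_def by blast
  then show ?thesis unfolding c_completion_def iemb_def by simp
qed

lemma iemb_in_Im_bar_iff:
  assumes T: "reverse_triangle \<tau>" and Sep: "separable_lms \<tau>" and S: "S_property \<tau>"
  shows "iemb \<tau> w \<in> Im_bar \<tau> (iemb \<tau> z) \<longleftrightarrow> chr \<tau> w z"
proof -
  have "iemb \<tau> w \<in> Im_bar \<tau> (iemb \<tau> z) \<longleftrightarrow> Ip \<tau> w \<inter> Im \<tau> z \<noteq> {}"
    using Im_bar_eq[OF T Sep iemb_in_c_completion[OF S]] iemb_in_c_completion[OF S]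
    by (simp add: iemb_def)
  also have "\<dots> \<longleftrightarrow> chr \<tau> w z"
    using chr_interpolate_iff[OF T Sep] by (simp add: Ip_def Im_def disjoint_iff)
  finally show ?thesis .
qed

lemma iemb_in_Ip_bar_iff:
  assumes T: "reverse_triangle \<tau>" and Sep: "separable_lms \<tau>" and S: "S_property \<tau>"
  shows "iemb \<tau> w \<in> Ip_bar \<tau> (iemb \<tau> z) \<longleftrightarrow> chr \<tau> z w"
proof -
  have "iemb \<tau> w \<in> Ip_bar \<tau> (iemb \<tau> z) \<longleftrightarrow> Ip \<tau> z \<inter> Im \<tau> w \<noteq> {}"
    using Ip_bar_eq[OF T Sep iemb_in_c_completion[OF S]] iemb_in_c_completion[OF S]
    by (simp add: iemb_def)
  also have "\<dots> \<longleftrightarrow> chr \<tau> z w"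
    using chr_interpolate_iff[OF T Sep] by (simp add: Ip_def Im_def disjoint_iff)
  finally show ?thesis .
qed

lemma Im_bar_iemb_subset_iff:
  assumes T: "reverse_triangle \<tau>" and Sep: "separable_lms \<tau>" and S: "S_property \<tau>"
  shows "Im_bar \<tau> (iemb \<tau> x) \<subseteq> Im_bar \<tau> (iemb \<tau> y) \<longleftrightarrow> Im \<tau> x \<subseteq> Im \<tau> y"
proof
  assume "Im_bar \<tau> (iemb \<tau> x) \<subseteq> Im_bar \<tau> (iemb \<tau> y)"
  then show "Im \<tau> x \<subseteq> Im \<tau> y"
    using iemb_in_Im_bar_iff[OF T Sep S] unfolding Im_def by blast
next
  assume "Im \<tau> x \<subseteq> Im \<tau> y"
  then show "Im_bar \<tau> (iemb \<tau> x) \<subseteq> Im_bar \<tau> (iemb \<tau> y)"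
    unfolding Im_bar_eq[OF T Sep iemb_in_c_completion[OF S]] by (auto simp: iemb_def)
qed

lemma Ip_bar_iemb_subset_iff:
  assumes T: "reverse_triangle \<tau>" and Sep: "separable_lms \<tau>" and S: "S_property \<tau>"
  shows "Ip_bar \<tau> (iemb \<tau> y) \<subseteq> Ip_bar \<tau> (iemb \<tau> x) \<longleftrightarrow> Ip \<tau> y \<subseteq> Ip \<tau> x"
proof
  assume "Ip_bar \<tau> (iemb \<tau> y) \<subseteq> Ip_bar \<tau> (iemb \<tau> x)"
  then show "Ip \<tau> y \<subseteq> Ip \<tau> x"
    using iemb_in_Ip_bar_iff[OF T Sep S] unfolding Ip_def by blast
next
  assume "Ip \<tau> y \<subseteq> Ip \<tau> x"
  then show "Ip_bar \<tau> (iemb \<tau> y) \<subseteq> Ip_bar \<tau> (iemb \<tau> x)"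
    unfolding Ip_bar_eq[OF T Sep iemb_in_c_completion[OF S]] by (auto simp: iemb_def)
qed

lemma leq_tau_bar_iemb_iff:
  "reverse_triangle \<tau> \<Longrightarrow> separable_lms \<tau> \<Longrightarrow> S_property \<tau> \<Longrightarrow>
    leq_tau_bar \<tau> (iemb \<tau> x) (iemb \<tau> y) \<longleftrightarrow> leq_tau \<tau> x y"
  unfolding leq_tau_bar_def leq_tau_def
  using Im_bar_iemb_subset_iff Ip_bar_iemb_subset_iff by blast

lemma
  fixes \<tau> :: "'a::topological_space \<Rightarrow> 'a \<Rightarrow> ennreal"
  assumes "lorentzian_metric_space \<tau>"
  shows open_Ip: "open (Ip \<tau> w)" and open_Im: "open (Im \<tau> w)"
proof -
  have "open {p :: 'a \<times> 'a. 0 < \<tau> (fst p) (snd p)}"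
    using assms unfolding lorentzian_metric_space_def lsc_tau_def by blast
  then have "open (Pair w -` {p. 0 < \<tau> (fst p) (snd p)})"
    and "open ((\<lambda>v. (v, w)) -` {p. 0 < \<tau> (fst p) (snd p)})"
    by (rule open_vimage, intro continuous_intros)+
  then show "open (Ip \<tau> w)" "open (Im \<tau> w)"
    unfolding Ip_def Im_def chr_def by (simp_all add: vimage_def)
qed

lemma leq_tau_iff_closure:
  assumes "lorentzian_metric_space \<tau>"
  shows "leq_tau \<tau> x y \<longleftrightarrow> y \<in> closure (Jp \<tau> x) \<and> x \<in> closure (Jm \<tau> y)"
proof
  assume "leq_tau \<tau> x y"
  then show "y \<in> closure (Jp \<tau> x) \<and> x \<in> closure (Jm \<tau> y)"
    unfolding Jp_def Jm_def by (simp add: closure_subset[THEN subsetD])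
next
  assume closure: "y \<in> closure (Jp \<tau> x) \<and> x \<in> closure (Jm \<tau> y)"
  have "Im \<tau> x \<subseteq> Im \<tau> y"
  proof
    fix w assume "w \<in> Im \<tau> x"
    then have "Ip \<tau> w \<inter> Jm \<tau> y \<noteq> {}"
      using closure open_Int_closure_eq_empty[OF open_Ip[OF assms]] by (auto simp: Ip_def Im_def)
    then show "w \<in> Im \<tau> y" unfolding Jm_def leq_tau_def Ip_def Im_def by blast
  qed
  moreover have "Ip \<tau> y \<subseteq> Ip \<tau> x"
  proof
    fix w assume "w \<in> Ip \<tau> y"
    then have "Im \<tau> w \<inter> Jp \<tau> x \<noteq> {}"
      using closure open_Int_closure_eq_empty[OF open_Im[OF assms]] by (auto simp: Ip_def Im_def)
    then show "w \<in> Ip \<tau> x" unfolding Jp_def leq_tau_def Ip_def Im_def by blast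
  qed
  ultimately show "leq_tau \<tau> x y" unfolding leq_tau_def by blast
qed

theorem mainTheorem19:
  fixes \<tau> :: "'a::topological_space \<Rightarrow> 'a \<Rightarrow> ennreal" and x y :: 'a
  assumes "lorentzian_metric_space \<tau>"
    and "full \<tau>"
    and "separable_lms \<tau>"
    and "chron_dense \<tau>"
    and "S_property \<tau>"
  shows "leq_tau_bar \<tau> (iemb \<tau> x) (iemb \<tau> y) \<longleftrightarrow>
         y \<in> closure (Jp \<tau> x) \<and> x \<in> closure (Jm \<tau> y)"
proof -
  have "leq_tau_bar \<tau> (iemb \<tau> x) (iemb \<tau> y) \<longleftrightarrow> leq_tau \<tau> x y"
    using leq_tau_bar_iemb_iff lorentzian_metric_space_reverse_triangle assms(1,3,5) by blast
  also have "\<dots> \<longleftrightarrow> y \<in> closure (Jp \<tau> x) \<and> x \<in> closure (Jm \<tau> y)"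
    using leq_tau_iff_closure[OF assms(1)] .
  finally show ?thesis .
qed

end
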